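(* For integers $n,k\geqslant 1$, let $\mathfrak{A}_{n,k}$ be the set of words $\omega=(\omega_1,\dots,\omega_n)$ of length $n$ on the alphabet $\{1,\dots,k\}$ such that $\omega$ avoids the pattern $010$, every letter of $\{1,\dots,k\}$ occurs in $\omega$, and $\omega_1=k$. Let $\mathfrak{a}_{n,k}=\#\mathfrak{A}_{n,k}$. Then for all $n,k\geqslant 1$, $$\mathfrak{a}_{n,k}=\genfrac{[}{]}{0pt}{}{n}{n+1-k}.$$
   Context: $\genfrac{[}{]}{0pt}{}{n}{j}$ denotes the unsigned Stirling number of the first kind (the number of permutations of $n$ elements with exactly $j$ cycles), with the convention that it is $0$ when $j\leqslant 0$ and $n\geqslant 1$, or when $j>n$. A word (sequence) $\omega=(\omega_1,\dots,\omega_n)$ of integers contains a pattern $p=(p_1,\dots,p_k)$ if some subsequence $(\omega_{i_1},\dots,\omega_{i_k})$ with $i_1<\dots<i_k$ is order-isomorphic to $p$ (i.e. $\omega_{i_a}<\omega_{i_b}$ iff $p_a<p_b$ and $\omega_{i_a}=\omega_{i_b}$ iff $p_a=p_b$); otherwise $\omega$ avoids $p$. Thus avoiding $010$ means there are no $i<j<l$ with $\omega_i=\omega_l<\omega_j$. *)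

theory Defs
  imports Main "HOL-Combinatorics.Stirling"
begin

definition avoids_010 :: "nat list \<Rightarrow> bool" where
  "avoids_010 w \<longleftrightarrow>
     \<not> (\<exists>i j l. i < j \<and> j < l \<and> l < length w \<and> w ! i = w ! l \<and> w ! l < w ! j)"

definition A_set :: "nat \<Rightarrow> nat \<Rightarrow> nat list set" where
  "A_set n k = {w. length w = n \<and> set w = {1..k} \<and> avoids_010 w \<and> w ! 0 = k}"

end

theory Submission
  imports Defs
begin

text \<open>Split the words of length \<open>n + 1\<close> according to whether their least letter \<open>1\<close>
  occurs once or repeatedly. If it occurs once, deleting it and lowering the other letters gives a
  word of \<open>A(n, k - 1)\<close>, and conversely \<open>1\<close> may be reinserted at any of the \<open>n\<close> positions
  after the first one. If it occurs repeatedly, avoidance of 010 forces the occurrences of the least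
  letter to be adjacent, so deleting one copy is a bijection onto \<open>A(n, k)\<close>. Hence
  \<open>a(n + 1, k) = n a(n, k - 1) + a(n, k)\<close>, which is the recurrence of the Stirling numbers
  \<open>c(n + 1, j + 1) = n c(n, j + 1) + c(n, j)\<close> read at \<open>j = n + 1 - k\<close>.\<close>

text \<open>A weakly monotone reindexing cannot collapse an occurrence of 010, because neighbouring
  positions of an occurrence carry different letters.\<close>
lemma avoids_010_reindex:
  assumes "avoids_010 w"
    and mono: "\<And>i j. i \<le> j \<Longrightarrow> j < length u \<Longrightarrow> h i \<le> h j"
    and letters: "\<And>i. i < length u \<Longrightarrow> h i < length w \<and> u ! i = w ! h i"
  shows "avoids_010 u"
  unfolding avoids_010_def
proof clarify
  fix i j l assume ijl: "i < j" "j < l" "l < length u" "u ! i = u ! l" "u ! l < u ! j"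
  have "h i \<noteq> h j" "h j \<noteq> h l"
    using ijl letters[of i] letters[of j] letters[of l] by auto
  then have "h i < h j" "h j < h l"
    using ijl mono[of i j] mono[of j l] by auto
  moreover have "h l < length w" "w ! h i = w ! h l" "w ! h l < w ! h j"
    using ijl letters[of i] letters[of j] letters[of l] by auto
  ultimately show False
    using assms(1) unfolding avoids_010_def by blast
qed

lemma avoids_010_map_strict_mono:
  assumes "strict_mono f"
  shows "avoids_010 (map f w) \<longleftrightarrow> avoids_010 w"
proof -
  have "map f w ! i = map f w ! l \<and> map f w ! l < map f w ! j \<longleftrightarrow> w ! i = w ! l \<and> w ! l < w ! j"
    if "i < j" "j < l" "l < length w" for i j l
    using that assms by (simp add: strict_mono_less strict_mono_eq)
  then show ?thesis
    unfolding avoids_010_def by (metis length_map)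
qed

lemma avoids_010_delete: "avoids_010 (xs @ c # ys) \<Longrightarrow> avoids_010 (xs @ ys)"
  by (rule avoids_010_reindex[where h = "\<lambda>i. if i < length xs then i else Suc i"])
    (auto simp: nth_append)

lemma avoids_010_duplicate_iff: "avoids_010 (xs @ c # c # ys) \<longleftrightarrow> avoids_010 (xs @ c # ys)"
proof
  show "avoids_010 (xs @ c # c # ys) \<Longrightarrow> avoids_010 (xs @ c # ys)"
    using avoids_010_delete[of "xs @ [c]" c ys] by simp
next
  assume "avoids_010 (xs @ c # ys)"
  then show "avoids_010 (xs @ c # c # ys)"
  proof (rule avoids_010_reindex[where h = "\<lambda>i. if i \<le> length xs then i else i - 1"])
    fix i assume i: "i < length (xs @ c # c # ys)"
    show "(if i \<le> length xs then i else i - 1) < length (xs @ c # ys) \<and>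
      (xs @ c # c # ys) ! i = (xs @ c # ys) ! (if i \<le> length xs then i else i - 1)"
    proof (cases "i \<le> Suc (length xs)")
      case True
      then show ?thesis by (auto simp: nth_append le_Suc_eq)
    next
      case False
      then obtain m where "i = Suc (Suc (length xs + m))"
        by (metis less_eq_Suc_le less_imp_Suc_add not_less_eq_eq)
      with i show ?thesis by (simp add: nth_append)
    qed
  qed auto
qed

lemma avoids_010_between:
  assumes "avoids_010 (xs @ c # zs @ c # ys)" and "x \<in> set zs"
  shows "x \<le> c"
proof (rule ccontr)
  assume "\<not> x \<le> c"
  obtain m where m: "m < length zs" "zs ! m = x"
    using assms(2) by (auto simp: in_set_conv_nth)
  let ?w = "xs @ c # zs @ c # ys"
  have "?w ! length xs = c" "?w ! Suc (length xs + m) = x"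
    "?w ! Suc (length xs + length zs) = c"
    using m by (simp_all add: nth_append)
  moreover have "length xs < Suc (length xs + m)" "Suc (length xs + m) < Suc (length xs + length zs)"
    "Suc (length xs + length zs) < length ?w"
    using m by simp_all
  ultimately show False
    using \<open>\<not> x \<le> c\<close> assms(1) unfolding avoids_010_def by (metis not_le)
qed

text \<open>An occurrence cannot use the new least letter: it is too small for the middle position
  and has no second copy for the outer ones.\<close>
lemma avoids_010_insert_min:
  assumes "avoids_010 (xs @ ys)" and greater: "\<forall>x \<in> set (xs @ ys). c < x"
  shows "avoids_010 (xs @ c # ys)"
  unfolding avoids_010_def
proof clarify
  let ?u = "xs @ c # ys" and ?p = "length xs"
  let ?h = "\<lambda>q. if q < ?p then q else q - 1"
  have at_p: "?u ! ?p = c"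
    by simp
  have off_p: "q < length ?u \<Longrightarrow> q \<noteq> ?p \<Longrightarrow> ?h q < length (xs @ ys) \<and> (xs @ ys) ! ?h q = ?u ! q"
    for q by (auto simp: nth_append nth_Cons')
  fix i j l assume ijl: "i < j" "j < l" "l < length ?u" "?u ! i = ?u ! l" "?u ! l < ?u ! j"
  have above: "c < ?u ! q" if "q < length ?u" "q \<noteq> ?p" for q
    using off_p[OF that] greater nth_mem by metis
  have "i \<noteq> ?p" "l \<noteq> ?p"
    using ijl above[of i] above[of l] at_p by auto
  moreover have "j \<noteq> ?p"
    using ijl above[of l] at_p \<open>l \<noteq> ?p\<close> by auto
  ultimately have "?h i < ?h j" "?h j < ?h l" "?h l < length (xs @ ys)"
    "(xs @ ys) ! ?h i = (xs @ ys) ! ?h l" "(xs @ ys) ! ?h l < (xs @ ys) ! ?h j"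
    using ijl off_p[of i] off_p[of j] off_p[of l] by auto
  with assms(1) show False
    unfolding avoids_010_def by blast
qed

definition dup_first :: "'a \<Rightarrow> 'a list \<Rightarrow> 'a list" where
  "dup_first c v = takeWhile (\<lambda>x. x \<noteq> c) v @ c # dropWhile (\<lambda>x. x \<noteq> c) v"

lemma dup_first_append: "c \<notin> set xs \<Longrightarrow> dup_first c (xs @ c # ys) = xs @ c # c # ys"
  unfolding dup_first_def by (simp add: takeWhile_append dropWhile_append)

lemma remove1_dup_first: "remove1 c (dup_first c v) = v"
proof -
  have "c \<notin> set (takeWhile (\<lambda>x. x \<noteq> c) v)"
    by (auto dest: set_takeWhileD)
  then show ?thesis
    unfolding dup_first_def by (simp add: remove1_append)
qed

definition lift_insert_one :: "nat \<Rightarrow> nat list \<Rightarrow> nat list" where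
  "lift_insert_one p v = take p (map Suc v) @ 1 # drop p (map Suc v)"

lemma set_lift_insert_one: "set (lift_insert_one p v) = insert 1 (Suc ` set v)"
  unfolding lift_insert_one_def
  by (metis Un_insert_right append_take_drop_id list.set(2) set_append set_map)

lemma remove1_lift_insert_one:
  assumes "0 \<notin> set v"
  shows "remove1 1 (lift_insert_one p v) = map Suc v"
proof -
  have "1 \<notin> set (take p (map Suc v))"
    using assms by (auto dest: in_set_takeD)
  then show ?thesis
    unfolding lift_insert_one_def by (simp add: remove1_append)
qed

definition extract_one :: "nat list \<Rightarrow> nat \<times> nat list" where
  "extract_one w = (length (takeWhile (\<lambda>x. x \<noteq> 1) w), map (\<lambda>x. x - 1) (remove1 1 w))"

lemma extract_one_append:
  "1 \<notin> set xs \<Longrightarrow> extract_one (xs @ 1 # ys) = (length xs, map (\<lambda>x. x - 1) (xs @ ys))"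
  unfolding extract_one_def by (simp add: takeWhile_append remove1_append)

lemma extract_one_lift_insert_one:
  assumes "0 \<notin> set v" and "p \<le> length v"
  shows "extract_one (lift_insert_one p v) = (p, v)"
proof -
  have one: "1 \<notin> set (take p (map Suc v))"
    using assms(1) by (auto dest: in_set_takeD)
  show ?thesis
    unfolding lift_insert_one_def extract_one_append[OF one]
    using assms(2) by (simp add: comp_def)
qed

lemma lift_insert_one_extract_one:
  assumes "1 \<notin> set xs" and "\<forall>x \<in> set (xs @ ys). 0 < x"
  shows "case_prod lift_insert_one (extract_one (xs @ 1 # ys)) = xs @ 1 # ys"
proof -
  have "map Suc (map (\<lambda>x. x - 1) (xs @ ys)) = xs @ ys"
    unfolding map_map using assms(2) by (intro map_idI) auto
  then show ?thesis
    unfolding extract_one_append[OF assms(1)] lift_insert_one_def by simp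
qed

lemma A_set_letters_pos: "w \<in> A_set n k \<Longrightarrow> x \<in> set w \<Longrightarrow> 0 < x"
  unfolding A_set_def by auto

lemma one_in_A_set: "w \<in> A_set n k \<Longrightarrow> 1 \<le> k \<Longrightarrow> 1 \<in> set w"
  unfolding A_set_def by auto

definition A_once :: "nat \<Rightarrow> nat \<Rightarrow> nat list set" where
  "A_once n k = {w \<in> A_set n k. 1 \<notin> set (remove1 1 w)}"

definition A_repeated :: "nat \<Rightarrow> nat \<Rightarrow> nat list set" where
  "A_repeated n k = {w \<in> A_set n k. 1 \<in> set (remove1 1 w)}"

lemma A_once_decomp:
  assumes "w \<in> A_once n k" "1 \<le> k"
  obtains xs ys where "w = xs @ 1 # ys" "1 \<notin> set (xs @ ys)"
proof -
  have w: "w \<in> A_set n k" "1 \<notin> set (remove1 1 w)"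
    using assms(1) unfolding A_once_def by auto
  obtain xs ys where xs: "w = xs @ 1 # ys" "1 \<notin> set xs"
    using split_list_first[OF one_in_A_set[OF w(1) assms(2)]] by blast
  moreover have "1 \<notin> set ys"
    using w(2) xs by (simp add: remove1_append)
  ultimately show thesis
    using that by simp
qed

text \<open>Nothing larger than the least letter fits between two of its copies, so a repeated \<open>1\<close>
  is doubled in place.\<close>
lemma A_repeated_decomp:
  assumes "w \<in> A_repeated n k"
  obtains xs ys where "w = xs @ 1 # 1 # ys" "1 \<notin> set xs"
proof -
  have w: "w \<in> A_set n k" "1 \<in> set (remove1 1 w)"
    using assms unfolding A_repeated_def by auto
  have "1 \<in> set w"
    using w(2) set_remove1_subset by fast
  then obtain xs zs where xs: "w = xs @ 1 # zs" "1 \<notin> set xs"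
    by (blast dest: split_list_first)
  then have "1 \<in> set zs"
    using w(2) by (simp add: remove1_append)
  then obtain us ys where us: "zs = us @ 1 # ys" "1 \<notin> set us"
    by (blast dest: split_list_first)
  have "us = []"
  proof (rule ccontr)
    assume "us \<noteq> []"
    then obtain x where "x \<in> set us" by (cases us) auto
    have "avoids_010 (xs @ 1 # us @ 1 # ys)"
      using w(1) xs(1) us(1) unfolding A_set_def by simp
    then have "x \<le> 1"
      using \<open>x \<in> set us\<close> by (rule avoids_010_between)
    have "x \<in> set w"
      using \<open>x \<in> set us\<close> xs(1) us(1) by simp
    then have "0 < x"
      by (rule A_set_letters_pos[OF w(1)])
    with \<open>x \<le> 1\<close> have "x = 1"
      by simp
    with \<open>x \<in> set us\<close> us(2) show False
      by simp
  qed
  with xs us show thesis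
    using that by simp
qed

lemma A_set_duplicate_iff: "xs @ c # c # ys \<in> A_set (Suc n) k \<longleftrightarrow> xs @ c # ys \<in> A_set n k"
proof -
  have "(xs @ c # c # ys) ! 0 = (xs @ c # ys) ! 0"
    by (cases xs) simp_all
  moreover have "set (xs @ c # c # ys) = set (xs @ c # ys)"
    by simp
  ultimately show ?thesis
    unfolding A_set_def by (simp add: avoids_010_duplicate_iff)
qed

lemma bij_betw_A_repeated:
  assumes "1 \<le> k"
  shows "bij_betw (dup_first 1) (A_set n k) (A_repeated (Suc n) k)"
proof (rule bij_betw_byWitness[where f' = "remove1 1"])
  show "\<forall>v \<in> A_set n k. remove1 1 (dup_first 1 v) = v"
    by (simp add: remove1_dup_first)
  show "\<forall>w \<in> A_repeated (Suc n) k. dup_first 1 (remove1 1 w) = w"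
  proof
    fix w assume "w \<in> A_repeated (Suc n) k"
    then obtain xs ys where "w = xs @ 1 # 1 # ys" "1 \<notin> set xs"
      by (rule A_repeated_decomp)
    then show "dup_first 1 (remove1 1 w) = w"
      by (simp add: remove1_append dup_first_append)
  qed
  show "dup_first 1 ` A_set n k \<subseteq> A_repeated (Suc n) k"
  proof clarify
    fix v assume v: "v \<in> A_set n k"
    then have "1 \<in> set v"
      using assms by (rule one_in_A_set)
    then obtain xs ys where xs: "v = xs @ 1 # ys" "1 \<notin> set xs"
      by (blast dest: split_list_first)
    have "dup_first 1 v \<in> A_set (Suc n) k"
      using v unfolding xs(1) dup_first_append[OF xs(2)] by (simp add: A_set_duplicate_iff)
    moreover have "1 \<in> set (remove1 1 (dup_first 1 v))"
      unfolding remove1_dup_first by fact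
    ultimately show "dup_first 1 v \<in> A_repeated (Suc n) k"
      unfolding A_repeated_def by blast
  qed
  show "remove1 1 ` A_repeated (Suc n) k \<subseteq> A_set n k"
  proof clarify
    fix w assume w: "w \<in> A_repeated (Suc n) k"
    then obtain xs ys where xs: "w = xs @ 1 # 1 # ys" "1 \<notin> set xs"
      by (rule A_repeated_decomp)
    have "xs @ 1 # 1 # ys \<in> A_set (Suc n) k"
      using w unfolding xs(1) A_repeated_def by simp
    then show "remove1 1 w \<in> A_set n k"
      unfolding xs(1) using xs(2) by (simp add: remove1_append A_set_duplicate_iff)
  qed
qed

lemma lift_insert_one_in_A_once:
  assumes "1 \<le> k" "p \<in> {1..n}" "v \<in> A_set n (k - 1)"
  shows "lift_insert_one p v \<in> A_once (Suc n) k"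
proof -
  have v: "length v = n" "set v = {1..k - 1}" "avoids_010 v" "v ! 0 = k - 1"
    using assms(3) unfolding A_set_def by auto
  let ?M = "map Suc v"
  have "length (lift_insert_one p v) = Suc n"
    using assms(2) v(1) unfolding lift_insert_one_def by simp
  moreover have "set (lift_insert_one p v) = {1..k}"
    using assms(1) v(2) by (auto simp: set_lift_insert_one)
  moreover have "avoids_010 (lift_insert_one p v)"
  proof -
    have "avoids_010 (take p ?M @ drop p ?M)"
      using v(3) by (simp add: avoids_010_map_strict_mono strict_mono_Suc_iff)
    moreover have "\<forall>x \<in> set (take p ?M @ drop p ?M). 1 < x"
      using v(2) by auto
    ultimately show ?thesis
      unfolding lift_insert_one_def by (rule avoids_010_insert_min)
  qed
  moreover have "lift_insert_one p v ! 0 = k"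
    using assms v(1,4) unfolding lift_insert_one_def by (simp add: nth_append)
  moreover have "1 \<notin> set (remove1 1 (lift_insert_one p v))"
  proof -
    have "0 \<notin> set v"
      using v(2) by simp
    then show ?thesis
      unfolding remove1_lift_insert_one[OF \<open>0 \<notin> set v\<close>] by auto
  qed
  ultimately show ?thesis
    unfolding A_once_def A_set_def by simp
qed

lemma lower_remove_one_in_A_set:
  assumes "xs @ 1 # ys \<in> A_set (Suc n) k" "1 \<notin> set (xs @ ys)" "xs \<noteq> []"
  shows "map (\<lambda>x. x - 1) (xs @ ys) \<in> A_set n (k - 1)"
proof -
  have w: "length (xs @ 1 # ys) = Suc n" "set (xs @ 1 # ys) = {1..k}"
    "avoids_010 (xs @ 1 # ys)" "(xs @ 1 # ys) ! 0 = k"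
    using assms(1) unfolding A_set_def by auto
  have "set (xs @ ys) = set (xs @ 1 # ys) - {1}"
    using assms(2) by auto
  also have "\<dots> = {2..k}"
    unfolding w(2) by auto
  finally have letters: "set (xs @ ys) = {2..k}" .
  define v where "v = map (\<lambda>x. x - 1) (xs @ ys)"
  have Mv: "map Suc v = xs @ ys"
    unfolding v_def map_map using letters by (intro map_idI) auto
  have "Suc ` set v = Suc ` {1..k - 1}"
    using letters by (auto simp: image_iff simp flip: Mv set_map)
  then have "set v = {1..k - 1}"
    by (metis inj_Suc inj_image_eq_iff)
  moreover have "avoids_010 v"
    using avoids_010_delete[OF w(3)]
    by (simp flip: Mv add: avoids_010_map_strict_mono strict_mono_Suc_iff)
  moreover have "v ! 0 = k - 1"
    using w(4) assms(3) unfolding v_def by (simp add: nth_append)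
  moreover have "length v = n"
    using w(1) unfolding v_def by simp
  ultimately show ?thesis
    unfolding A_set_def v_def by simp
qed

lemma extract_one_in_A_set:
  assumes "1 \<le> n" "xs @ 1 # ys \<in> A_once (Suc n) k" "1 \<notin> set (xs @ ys)"
  shows "extract_one (xs @ 1 # ys) \<in> {1..n} \<times> A_set n (k - 1)"
proof -
  have w: "xs @ 1 # ys \<in> A_set (Suc n) k"
    using assms(2) unfolding A_once_def by simp
  have "xs \<noteq> []"
  proof
    assume "xs = []"
    then have "ys \<noteq> []" "set (1 # ys) = {1..1}"
      using w assms(1) unfolding A_set_def by auto
    then show False
      using assms(3) by (cases ys) auto
  qed
  then have "length xs \<in> {1..n}"
    using w unfolding A_set_def by (simp add: Suc_le_eq)
  moreover have "1 \<notin> set xs"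
    using assms(3) by simp
  ultimately show ?thesis
    using lower_remove_one_in_A_set[OF w assms(3) \<open>xs \<noteq> []\<close>]
    unfolding extract_one_append[OF \<open>1 \<notin> set xs\<close>] by simp
qed

lemma bij_betw_A_once:
  assumes "1 \<le> n" "1 \<le> k"
  shows "bij_betw (case_prod lift_insert_one) ({1..n} \<times> A_set n (k - 1)) (A_once (Suc n) k)"
proof (rule bij_betw_byWitness[where f' = extract_one])
  have "extract_one (lift_insert_one p v) = (p, v)" if "p \<in> {1..n}" "v \<in> A_set n (k - 1)" for p v
    using that by (intro extract_one_lift_insert_one) (auto simp: A_set_def)
  then show "\<forall>a \<in> {1..n} \<times> A_set n (k - 1). extract_one (case_prod lift_insert_one a) = a"
    by auto
  show "case_prod lift_insert_one ` ({1..n} \<times> A_set n (k - 1)) \<subseteq> A_once (Suc n) k"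
    using assms(2) lift_insert_one_in_A_once by auto
  have inverse: "case_prod lift_insert_one (extract_one w) = w \<and>
      extract_one w \<in> {1..n} \<times> A_set n (k - 1)" if w: "w \<in> A_once (Suc n) k" for w
  proof -
    obtain xs ys where xs: "w = xs @ 1 # ys" "1 \<notin> set (xs @ ys)"
      using w assms(2) by (rule A_once_decomp)
    have "\<forall>x \<in> set (xs @ ys). 0 < x"
      using w xs(1) A_set_letters_pos unfolding A_once_def by fastforce
    then have "case_prod lift_insert_one (extract_one w) = w"
      unfolding xs(1) using xs(2) by (intro lift_insert_one_extract_one) auto
    moreover have "extract_one w \<in> {1..n} \<times> A_set n (k - 1)"
      using extract_one_in_A_set[OF assms(1) w[unfolded xs(1)] xs(2)] xs(1) by simp
    ultimately show ?thesis ..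
  qed
  then show "\<forall>w \<in> A_once (Suc n) k. case_prod lift_insert_one (extract_one w) = w"
    by blast
  from inverse show "extract_one ` A_once (Suc n) k \<subseteq> {1..n} \<times> A_set n (k - 1)"
    by blast
qed

lemma finite_A_set: "finite (A_set n k)"
proof (rule finite_subset)
  show "A_set n k \<subseteq> {w. set w \<subseteq> {1..k} \<and> length w = n}"
    unfolding A_set_def by auto
  show "finite {w. set w \<subseteq> {1..k} \<and> length w = n}"
    by (rule finite_lists_length_eq) simp
qed

lemma card_A_set_Suc:
  assumes "1 \<le> n" "1 \<le> k"
  shows "card (A_set (Suc n) k) = n * card (A_set n (k - 1)) + card (A_set n k)"
proof -
  have "A_set (Suc n) k = A_once (Suc n) k \<union> A_repeated (Suc n) k"
    "A_once (Suc n) k \<inter> A_repeated (Suc n) k = {}"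
    unfolding A_once_def A_repeated_def by auto
  moreover have "finite (A_once (Suc n) k)" "finite (A_repeated (Suc n) k)"
    using finite_A_set unfolding A_once_def A_repeated_def by simp_all
  ultimately have "card (A_set (Suc n) k) = card (A_once (Suc n) k) + card (A_repeated (Suc n) k)"
    by (simp add: card_Un_disjoint)
  also have "card (A_once (Suc n) k) = card ({1..n} \<times> A_set n (k - 1))"
    using bij_betw_same_card[OF bij_betw_A_once[OF assms]] by simp
  also have "card (A_repeated (Suc n) k) = card (A_set n k)"
    using bij_betw_same_card[OF bij_betw_A_repeated[OF assms(2)]] by simp
  finally show ?thesis
    by (simp add: card_cartesian_product)
qed

lemma A_set_0: "1 \<le> n \<Longrightarrow> A_set n 0 = {}"
  unfolding A_set_def by auto

lemma A_set_1: "A_set 1 k = (if k = 1 then {[1]} else {})"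
  unfolding A_set_def avoids_010_def
  by (auto simp: length_Suc_conv) (metis atLeastAtMost_singleton_iff)

lemma stirling_Suc_complement:
  assumes "1 \<le> n" "1 \<le> k"
  shows "stirling (Suc n) (Suc n + 1 - k) = n * stirling n (n + 1 - (k - 1)) + stirling n (n + 1 - k)"
proof (cases "k \<le> n + 1")
  case True
  then have "Suc n + 1 - k = Suc (n + 1 - k)" "n + 1 - (k - 1) = Suc (n + 1 - k)"
    using assms(2) by auto
  then show ?thesis
    by simp
next
  case False
  then show ?thesis
    using assms(1) by simp
qed

lemma card_A_set: "1 \<le> n \<Longrightarrow> card (A_set n k) = stirling n (n + 1 - k)"
proof (induction n arbitrary: k rule: nat_induct_at_least)
  case base
  show ?case
    unfolding A_set_1 by (cases "k = 0") auto
next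
  case (Suc n)
  show ?case
  proof (cases "k = 0")
    case True
    then show ?thesis
      by (simp add: A_set_0)
  next
    case False
    then show ?thesis
      using card_A_set_Suc Suc stirling_Suc_complement by simp
  qed
qed

theorem mainTheorem1:
  fixes n k :: nat
  assumes "n \<ge> 1" and "k \<ge> 1"
  shows "card (A_set n k) = stirling n (n + 1 - k)"
  using assms(1) by (rule card_A_set)

end
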